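(* Let $\gamma_i\in\mathcal{M}_{k_i}\otimes\mathcal{M}_{k_i}$, $i=1,\dots,n$, be states whose images are not contained in the anti-symmetric subspace of $\mathbb{C}^{k_i}\otimes\mathbb{C}^{k_i}$, and let $S=S(\gamma_1,\dots,\gamma_n)\in\mathcal{M}_{k_1\cdots k_n}\otimes\mathcal{M}_{k_1\cdots k_n}$. Then: (1) $S^\Gamma\ge0$ if and only if $\gamma_i^\Gamma\ge0$ for every $i$; (2) $\mathcal{R}(S^\Gamma)\ge0$ if and only if $\mathcal{R}(\gamma_i^\Gamma)\ge0$ for every $i$; (3) $\mathcal{R}(S)=S$ if and only if $\mathcal{R}(\gamma_i)=\gamma_i$ for every $i$.
   Context: $\mathcal{M}_k$ denotes complex $k\times k$ matrices; $\mathcal{M}_k\otimes\mathcal{M}_m\cong\mathcal{M}_{km}$ via the Kronecker product. A state is a positive semidefinite Hermitian matrix (not necessarily of trace one). The anti-symmetric subspace of $\mathbb{C}^k\otimes\mathbb{C}^k$ is $\{x:F_kx=-x\}$, where $F_k(v\otimes w)=w\otimes v$. Shuffle: if $\gamma_i=\sum_{j=1}^{n_i}A^i_j\otimes B^i_j\in\mathcal{M}_{k_i}\otimes\mathcal{M}_{m_i}$, then $S(\gamma_1,\dots,\gamma_n)=\sum_{j_1,\dots,j_n}A^1_{j_1}\otimes\cdots\otimes A^n_{j_n}\otimes B^1_{j_1}\otimes\cdots\otimes B^n_{j_n}\in\mathcal{M}_{k_1\cdots k_n}\otimes\mathcal{M}_{m_1\cdots m_n}$. Partial transpose: $(\sum_iA_i\otimes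 B_i)^\Gamma=\sum_iA_i\otimes B_i^t$. Realignment on $\mathcal{M}_k\otimes\mathcal{M}_k$: identify $\mathcal{M}_k$ with $\mathbb{C}^k\otimes\mathbb{C}^k$ via $\mathrm{vec}(vw^t)=v\otimes w$ (extended linearly), and set $\mathcal{R}(A\otimes B)=\mathrm{vec}(A)\mathrm{vec}(B)^t$, extended linearly. *)

theory Defs
  imports "Jordan_Normal_Form.Matrix"
begin

text \<open>A state: positive semidefinite Hermitian square matrix (not necessarily trace one).\<close>
definition psd :: "complex mat \<Rightarrow> bool" where
  "psd A \<longleftrightarrow> dim_row A = dim_col A \<and>
     (\<forall>i < dim_row A. \<forall>j < dim_row A. A $$ (i, j) = cnj (A $$ (j, i))) \<and>
     (\<forall>v \<in> carrier_vec (dim_row A).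
        0 \<le> Re (\<Sum>i < dim_row A. \<Sum>j < dim_row A. cnj (v $ i) * A $$ (i, j) * v $ j))"

text \<open>Anti-symmetric subspace of C^k (x) C^k, with e_a (x) e_b = e_(a*k+b).\<close>
definition antisym_subspace :: "nat \<Rightarrow> complex vec set" where
  "antisym_subspace k = {x \<in> carrier_vec (k * k).
     \<forall>a < k. \<forall>b < k. x $ (b * k + a) = - (x $ (a * k + b))}"

definition mat_image :: "complex mat \<Rightarrow> complex vec set" where
  "mat_image A = {A *\<^sub>v v | v. v \<in> carrier_vec (dim_col A)}"

text \<open>Partial transpose on M_k (x) M_m (identified with M_(km) via Kronecker product).\<close>
definition ptrans :: "nat \<Rightarrow> complex mat \<Rightarrow> complex mat" where
  "ptrans m X = mat (dim_row X) (dim_col X)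
     (\<lambda>(i, j). X $$ ((i div m) * m + j mod m, (j div m) * m + i mod m))"

text \<open>Realignment on M_k (x) M_k: R(E_ab (x) E_cd) = E_(ak+b, ck+d).\<close>
definition realign :: "nat \<Rightarrow> complex mat \<Rightarrow> complex mat" where
  "realign k X = mat (k * k) (k * k)
     (\<lambda>(i, j). X $$ ((i div k) * k + j div k, (i mod k) * k + j mod k))"

text \<open>Mixed-radix digit i (factor i, first factor most significant) of an index
  into C^(k_0) (x) ... (x) C^(k_(n-1)).\<close>
definition digit :: "(nat \<Rightarrow> nat) \<Rightarrow> nat \<Rightarrow> nat \<Rightarrow> nat \<Rightarrow> nat" where
  "digit k n i x = (x div (\<Prod>j \<in> {i<..<n}. k j)) mod k i"

text \<open>Shuffle S(g_0,...,g_(n-1)) with g_i in M_(k_i) (x) M_(k_i); the result lies in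
  M_K (x) M_K with K = k_0 * ... * k_(n-1). Entrywise unfolding of
  sum A^1 (x) ... (x) A^n (x) B^1 (x) ... (x) B^n.\<close>
definition shuffle :: "nat \<Rightarrow> (nat \<Rightarrow> nat) \<Rightarrow> (nat \<Rightarrow> complex mat) \<Rightarrow> complex mat" where
  "shuffle n k g = (let K = (\<Prod>i<n. k i) in
     mat (K * K) (K * K) (\<lambda>(r, c).
       \<Prod>i<n. g i $$ (digit k n i (r div K) * k i + digit k n i (r mod K),
                      digit k n i (c div K) * k i + digit k n i (c mod K))))"

end

theory Submission
  imports Defs "HOL-Library.FuncSet"
begin

text \<open>
  Up to a reordering of tensor factors, the shuffle \<open>S\<close> is the Kronecker product
  \<open>\<gamma>\<^sub>1 \<otimes> \<dots> \<otimes> \<gamma>\<^sub>n\<close>, and partial transposition and realignment act factorwise, so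
  \<open>S\<^sup>\<Gamma>\<close>, \<open>\<R>(S\<^sup>\<Gamma>)\<close> and \<open>\<R>(S)\<close> are the shuffles of the \<open>\<gamma>\<^sub>i\<^sup>\<Gamma>\<close>, \<open>\<R>(\<gamma>\<^sub>i\<^sup>\<Gamma>)\<close> and \<open>\<R>(\<gamma>\<^sub>i)\<close>.
  A Kronecker product of positive semidefinite matrices is positive semidefinite, since
  Gram decompositions multiply. Conversely, evaluating the quadratic form of a Kronecker
  product on a product vector \<open>w\<^sub>1 \<otimes> \<dots> \<otimes> x \<otimes> \<dots> \<otimes> w\<^sub>n\<close> gives the product of the
  factors' quadratic forms; choosing the \<open>w\<^sub>j\<close> with strictly positive values shows that each
  factor is positive semidefinite. Such \<open>w\<^sub>j\<close> exist because a state whose image is not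
  anti-symmetric has a nonzero diagonal entry. Finally, equal Kronecker products have
  proportional factors, so \<open>\<R>(S) = S\<close> forces \<open>\<R>(\<gamma>\<^sub>i) = z \<gamma>\<^sub>i\<close>; as \<open>\<R>\<close> is an involution,
  \<open>z = \<plusminus>1\<close>, and \<open>z = -1\<close> is incompatible with positivity.
\<close>

section \<open>Positive semidefinite entry functions\<close>

text \<open>Square matrices are handled through their entry functions on \<open>{..<m}\<close>; entries of
  shuffles, partial transposes and realignments are then plain index arithmetic.\<close>

definition quad_form :: "nat \<Rightarrow> (nat \<Rightarrow> nat \<Rightarrow> complex) \<Rightarrow> (nat \<Rightarrow> complex) \<Rightarrow> complex" where
  "quad_form m M x = (\<Sum>i<m. \<Sum>j<m. cnj (x i) * M i j * x j)"

definition psd_fun :: "nat \<Rightarrow> (nat \<Rightarrow> nat \<Rightarrow> complex) \<Rightarrow> bool" where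
  "psd_fun m M \<longleftrightarrow> (\<forall>i<m. \<forall>j<m. M i j = cnj (M j i)) \<and> (\<forall>x. 0 \<le> Re (quad_form m M x))"

lemma quad_form_cong:
  "(\<And>i j. i < m \<Longrightarrow> j < m \<Longrightarrow> M i j = M' i j) \<Longrightarrow> (\<And>i. i < m \<Longrightarrow> x i = x' i) \<Longrightarrow>
   quad_form m M x = quad_form m M' x'"
  unfolding quad_form_def by (intro sum.cong refl) auto

lemma quad_form_support:
  assumes "S \<subseteq> {..<m}" "\<And>i. i \<notin> S \<Longrightarrow> x i = 0"
  shows "quad_form m M x = (\<Sum>i\<in>S. \<Sum>j\<in>S. cnj (x i) * M i j * x j)"
proof -
  have restrict: "(\<Sum>i<m. f i) = (\<Sum>i\<in>S. f i)" if "\<And>i. i \<notin> S \<Longrightarrow> f i = 0" for f :: "nat \<Rightarrow> complex"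
    using assms(1) that by (intro sum.mono_neutral_right) auto
  have "quad_form m M x = (\<Sum>i\<in>S. \<Sum>j<m. cnj (x i) * M i j * x j)"
    unfolding quad_form_def by (rule restrict) (simp add: assms(2))
  also have "\<dots> = (\<Sum>i\<in>S. \<Sum>j\<in>S. cnj (x i) * M i j * x j)"
    by (intro sum.cong refl restrict) (simp add: assms(2))
  finally show ?thesis .
qed

lemma quad_form_indicator:
  "S \<subseteq> {..<m} \<Longrightarrow> quad_form m M (\<lambda>j. if j \<in> S then 1 else 0) = (\<Sum>i\<in>S. \<Sum>j\<in>S. M i j)"
  by (subst quad_form_support[of S]) (auto intro!: sum.cong)

lemma psd_mat_iff_psd_fun: "psd (mat m m (\<lambda>(i, j). M i j)) \<longleftrightarrow> psd_fun m M"
proof -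
  have "(\<forall>v \<in> carrier_vec m. 0 \<le> Re (\<Sum>i<m. \<Sum>j<m. cnj (v $ i) * M i j * v $ j))
      \<longleftrightarrow> (\<forall>x. 0 \<le> Re (quad_form m M x))"
  proof
    assume nonneg: "\<forall>v \<in> carrier_vec m. 0 \<le> Re (\<Sum>i<m. \<Sum>j<m. cnj (v $ i) * M i j * v $ j)"
    show "\<forall>x. 0 \<le> Re (quad_form m M x)"
    proof
      fix x
      have "quad_form m M x = (\<Sum>i<m. \<Sum>j<m. cnj (vec m x $ i) * M i j * vec m x $ j)"
        unfolding quad_form_def by (intro sum.cong refl) auto
      moreover have "vec m x \<in> carrier_vec m" by simp
      ultimately show "0 \<le> Re (quad_form m M x)" using nonneg by (simp only:)
    qed
  qed (simp add: quad_form_def)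
  moreover have "(\<Sum>i<m. \<Sum>j<m. cnj (v $ i) * mat m m (\<lambda>(i, j). M i j) $$ (i, j) * v $ j)
      = (\<Sum>i<m. \<Sum>j<m. cnj (v $ i) * M i j * v $ j)" for v
    by (intro sum.cong refl) auto
  ultimately show ?thesis unfolding psd_def psd_fun_def by simp
qed

lemma carrier_mat_eq_mat: "A \<in> carrier_mat m n \<Longrightarrow> A = mat m n (\<lambda>(i, j). A $$ (i, j))"
  by (rule eq_matI) auto

lemma quad_form_real_if_hermitian:
  assumes "\<forall>i<m. \<forall>j<m. M i j = cnj (M j i)"
  shows "Im (quad_form m M x) = 0"
proof -
  have "cnj (quad_form m M x) = (\<Sum>i<m. \<Sum>j<m. x i * cnj (M i j) * cnj (x j))"
    unfolding quad_form_def cnj_sum by simp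
  also have "\<dots> = (\<Sum>i<m. \<Sum>j<m. x i * M j i * cnj (x j))"
    using assms by (intro sum.cong refl) (metis complex_cnj_cnj lessThan_iff)
  also have "\<dots> = (\<Sum>j<m. \<Sum>i<m. x i * M j i * cnj (x j))" by (rule sum.swap)
  also have "\<dots> = quad_form m M x"
    unfolding quad_form_def by (intro sum.cong refl) (simp add: algebra_simps)
  finally show ?thesis by (metis Reals_cnj_iff complex_is_Real_iff)
qed

lemma hermitian_if_quad_form_real:
  assumes real: "\<And>x. Im (quad_form m M x) = 0" and "p < m" "q < m"
  shows "M p q = cnj (M q p)"
proof -
  have diag: "Im (M j j) = 0" if "j < m" for j
    using real[of "\<lambda>i. if i = j then 1 else 0"] that by (simp add: quad_form_indicator[of "{j}", simplified])
  show ?thesis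
  proof (cases "p = q")
    case True
    then show ?thesis using diag \<open>p < m\<close> by (simp add: complex_eq_iff)
  next
    case False
    have "Im (M p q) + Im (M q p) = 0"
      using real[of "\<lambda>i. if i = p \<or> i = q then 1 else 0"] diag assms(2,3) False
      by (simp add: quad_form_indicator[of "{p, q}", simplified])
    moreover have "Re (M p q) - Re (M q p) = 0"
      using real[of "\<lambda>i. if i = p then 1 else if i = q then \<i> else 0"] diag assms(2,3) False
      by (subst (asm) quad_form_support[of "{p, q}"]) auto
    ultimately show ?thesis by (simp add: complex_eq_iff)
  qed
qed

lemma psd_fun_diag:
  assumes "psd_fun m M" "p < m"
  shows "Im (M p p) = 0" "0 \<le> Re (M p p)"
proof -
  have "M p p = cnj (M p p)" using assms unfolding psd_fun_def by blast
  from arg_cong[OF this, of Im] show "Im (M p p) = 0" by simp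
  have "quad_form m M (\<lambda>i. if i \<in> {p} then 1 else 0) = M p p"
    using assms(2) by (subst quad_form_indicator) simp_all
  then show "0 \<le> Re (M p p)" using assms(1) unfolding psd_fun_def by metis
qed

lemma psd_fun_diag_pos:
  assumes "psd_fun m M" "p < m" "M p p \<noteq> 0"
  shows "Im (M p p) = 0" "0 < Re (M p p)"
  using psd_fun_diag[OF assms(1,2)] assms(3) by (auto simp: complex_eq_iff)

lemma psd_fun_zero_diag:
  assumes "psd_fun m M" "p < m" "q < m" "M q q = 0"
  shows "M p q = 0"
proof (rule ccontr)
  assume b0: "M p q \<noteq> 0"
  then have "p \<noteq> q" using assms(4) by auto
  define b where "b = M p q"
  have bq: "M q p = cnj b" using assms(1-3) unfolding psd_fun_def b_def by blast
  define s :: real where "s = (Re (M p p) + 1) / (2 * (cmod b)^2)"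
  have "cmod b > 0" using b0 b_def by auto
  define x where "x i = (if i = p then 1 else if i = q then - of_real s * cnj b else 0)" for i
  have x: "x p = 1" "x q = - of_real s * cnj b" using \<open>p \<noteq> q\<close> by (simp_all add: x_def)
  have "quad_form m M x = (\<Sum>i\<in>{p, q}. \<Sum>j\<in>{p, q}. cnj (x i) * M i j * x j)"
    using assms(2,3) by (intro quad_form_support) (auto simp: x_def)
  also have "\<dots> = M p p - 2 * of_real s * (b * cnj b)"
    using \<open>p \<noteq> q\<close> assms(4) by (simp add: x b_def[symmetric] bq algebra_simps)
  also have "b * cnj b = of_real ((cmod b)^2)" by (metis complex_norm_square)
  finally have "Re (quad_form m M x) = Re (M p p) - 2 * s * (cmod b)^2" by simp
  also have "\<dots> = -1" unfolding s_def using \<open>cmod b > 0\<close> by (simp add: field_simps)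
  finally have "Re (quad_form m M x) = -1" .
  moreover have "0 \<le> Re (quad_form m M x)" using assms(1) unfolding psd_fun_def by blast
  ultimately show False by simp
qed

section \<open>Gram decompositions\<close>

lemma quad_form_Suc:
  "quad_form (Suc m) M x = quad_form m M x + (\<Sum>i<m. cnj (x i) * M i m) * x m
     + cnj (x m) * (\<Sum>j<m. M m j * x j) + cnj (x m) * M m m * x m"
  unfolding quad_form_def by (simp add: sum.distrib sum_distrib_left sum_distrib_right algebra_simps)

lemma psd_fun_SucD: "psd_fun (Suc m) M \<Longrightarrow> psd_fun m M"
proof -
  assume psd: "psd_fun (Suc m) M"
  have "quad_form m M x = quad_form (Suc m) M (x(m := 0))" for x
    unfolding quad_form_Suc by (simp, rule quad_form_cong) auto
  then show ?thesis using psd unfolding psd_fun_def by (metis less_SucI)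
qed

lemma quad_form_schur_complement:
  assumes herm: "\<And>i j. i < Suc m \<Longrightarrow> j < Suc m \<Longrightarrow> M i j = cnj (M j i)"
    and d: "M m m = of_real d" "0 < d"
  shows "quad_form m (\<lambda>p q. M p q - M p m * cnj (M q m) / of_real d) x
       = quad_form (Suc m) M (x(m := - (\<Sum>j<m. M m j * x j) / of_real d))"
proof -
  define s where "s = (\<Sum>j<m. M m j * x j)"
  define y where "y = x(m := - s / of_real d)"
  have col: "(\<Sum>i<m. cnj (x i) * M i m) = cnj s"
    unfolding s_def cnj_sum by (intro sum.cong refl) (simp add: herm[of _ m] mult.commute)
  have row: "(\<Sum>j<m. cnj (M j m) * x j) = s"
    unfolding s_def by (intro sum.cong refl) (simp add: herm[of m])
  have "quad_form m (\<lambda>p q. M p q - M p m * cnj (M q m) / of_real d) x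
      = (\<Sum>i<m. \<Sum>j<m. cnj (x i) * M i j * x j - (cnj (x i) * M i m) * (cnj (M j m) * x j) / of_real d)"
    unfolding quad_form_def by (intro sum.cong refl) (simp add: algebra_simps)
  also have "\<dots> = quad_form m M x - cnj s * s / of_real d"
    unfolding quad_form_def sum_subtractf sum_product[symmetric] sum_divide_distrib[symmetric] col row ..
  also have "\<dots> = quad_form m M x + cnj s * (- s / of_real d) + cnj (- s / of_real d) * s
      + cnj (- s / of_real d) * of_real d * (- s / of_real d)"
    using \<open>0 < d\<close> by (simp add: field_simps)
  also have "\<dots> = quad_form (Suc m) M y"
  proof -
    have "quad_form m M y = quad_form m M x" by (rule quad_form_cong) (auto simp: y_def)
    moreover have "(\<Sum>i<m. cnj (y i) * M i m) = cnj s" using col by (simp add: y_def)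
    moreover have "(\<Sum>j<m. M m j * y j) = s" unfolding s_def by (intro sum.cong refl) (auto simp: y_def)
    ultimately show ?thesis unfolding quad_form_Suc by (simp add: y_def d)
  qed
  finally show ?thesis unfolding y_def s_def .
qed

lemma psd_fun_schur_complement:
  assumes psd: "psd_fun (Suc m) M" and d: "M m m = of_real d" "0 < d"
  shows "psd_fun m (\<lambda>p q. M p q - M p m * cnj (M q m) / of_real d)"
proof -
  have herm: "M i j = cnj (M j i)" if "i < Suc m" "j < Suc m" for i j
    using psd that unfolding psd_fun_def by blast
  have nonneg: "0 \<le> Re (quad_form (Suc m) M y)" for y
    using psd unfolding psd_fun_def by blast
  have "M i j - M i m * cnj (M j m) / of_real d = cnj (M j i - M j m * cnj (M i m) / of_real d)"
    if "i < m" "j < m" for i j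
    using that herm[of i j] by (simp add: mult.commute)
  moreover have "0 \<le> Re (quad_form m (\<lambda>p q. M p q - M p m * cnj (M q m) / of_real d) x)" for x
    using quad_form_schur_complement[of m M, OF herm d] nonneg by simp
  ultimately show ?thesis unfolding psd_fun_def by blast
qed

lemma psd_fun_peel_last:
  assumes psd: "psd_fun (Suc m) M"
  obtains u where "psd_fun m (\<lambda>p q. M p q - u p * cnj (u q))"
    and "\<And>p q. p < Suc m \<Longrightarrow> q < Suc m \<Longrightarrow> p = m \<or> q = m \<Longrightarrow> M p q = u p * cnj (u q)"
proof (cases "M m m = 0")
  case True
  have col: "M p m = 0" if "p < Suc m" for p
    using psd_fun_zero_diag[OF psd that _ True] by simp
  have "M p q = 0" if "p < Suc m" "q < Suc m" "p = m \<or> q = m" for p q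
  proof -
    have "M m q = cnj (M q m)" using psd \<open>q < Suc m\<close> unfolding psd_fun_def by blast
    then show ?thesis using that col by auto
  qed
  then show ?thesis using psd_fun_SucD[OF psd] by (intro that[of "\<lambda>_. 0"]) auto
next
  case False
  define d where "d = Re (M m m)"
  have d: "M m m = of_real d" using psd_fun_diag(1)[OF psd] unfolding d_def by (simp add: complex_eq_iff)
  have "0 \<le> d" unfolding d_def using psd_fun_diag(2)[OF psd, of m] by simp
  moreover have "d \<noteq> 0" using False d by auto
  ultimately have "0 < d" by simp
  define u where "u p = M p m / of_real (sqrt d)" for p
  have uu: "u p * cnj (u q) = M p m * cnj (M q m) / of_real d" for p q
    unfolding u_def using \<open>0 < d\<close> by (simp flip: of_real_mult)
  show ?thesis
  proof (rule that[of u])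
    show "psd_fun m (\<lambda>p q. M p q - u p * cnj (u q))"
      unfolding uu using psd_fun_schur_complement[OF psd d \<open>0 < d\<close>] .
    fix p q assume "p < Suc m" "q < Suc m" "p = m \<or> q = m"
    then consider "q = m" | "p = m" "q < Suc m" by blast
    then show "M p q = u p * cnj (u q)"
    proof cases
      case 1
      then show ?thesis unfolding uu using d \<open>0 < d\<close> by simp
    next
      case 2
      have "M m q = cnj (M q m)" using psd \<open>q < Suc m\<close> unfolding psd_fun_def by blast
      then show ?thesis unfolding uu using 2 d \<open>0 < d\<close> by simp
    qed
  qed
qed

lemma psd_fun_gram:
  "psd_fun m M \<Longrightarrow> \<exists>(N::nat) v. \<forall>p<m. \<forall>q<m. M p q = (\<Sum>j<N. v j p * cnj (v j q))"
proof (induction m arbitrary: M)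
  case 0
  show ?case by auto
next
  case (Suc m)
  obtain u where psd': "psd_fun m (\<lambda>p q. M p q - u p * cnj (u q))"
    and edge: "\<And>p q. p < Suc m \<Longrightarrow> q < Suc m \<Longrightarrow> p = m \<or> q = m \<Longrightarrow> M p q = u p * cnj (u q)"
    using psd_fun_peel_last[OF Suc.prems] by blast
  obtain N :: nat and v where v: "\<forall>p<m. \<forall>q<m. M p q - u p * cnj (u q) = (\<Sum>j<N. v j p * cnj (v j q))"
    using Suc.IH[OF psd'] by blast
  define w where "w j = (if j < N then (v j)(m := 0) else u)" for j
  have "M p q = (\<Sum>j<Suc N. w j p * cnj (w j q))" if "p < Suc m" "q < Suc m" for p q
  proof (cases "p = m \<or> q = m")
    case True
    then show ?thesis using edge that by (auto simp: w_def)
  next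
    case False
    with that have "p < m" "q < m" by auto
    then have "M p q = (\<Sum>j<N. v j p * cnj (v j q)) + u p * cnj (u q)"
      using v by (simp add: diff_eq_eq)
    then show ?thesis using False by (simp add: w_def)
  qed
  then show ?case by blast
qed

lemma psd_fun_of_gram:
  assumes "finite P" and gram: "\<And>p q. p < m \<Longrightarrow> q < m \<Longrightarrow> M p q = (\<Sum>g\<in>P. v g p * cnj (v g q))"
  shows "psd_fun m M"
  unfolding psd_fun_def
proof (intro conjI allI impI)
  fix p q assume "p < m" "q < m"
  then show "M p q = cnj (M q p)" by (simp add: gram cnj_sum mult.commute)
next
  fix x
  define \<beta> where "\<beta> g = (\<Sum>c<m. cnj (v g c) * x c)" for g
  have "quad_form m M x = (\<Sum>r<m. \<Sum>c<m. \<Sum>g\<in>P. cnj (x r) * (v g r * cnj (v g c)) * x c)"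
    unfolding quad_form_def by (intro sum.cong refl) (simp add: gram sum_distrib_left sum_distrib_right)
  also have "\<dots> = (\<Sum>r<m. \<Sum>g\<in>P. \<Sum>c<m. cnj (x r) * (v g r * cnj (v g c)) * x c)"
    by (intro sum.cong refl) (rule sum.swap)
  also have "\<dots> = (\<Sum>g\<in>P. \<Sum>r<m. \<Sum>c<m. cnj (x r) * (v g r * cnj (v g c)) * x c)"
    by (rule sum.swap)
  also have "\<dots> = (\<Sum>g\<in>P. cnj (\<beta> g) * \<beta> g)"
    unfolding \<beta>_def cnj_sum sum_product by (intro sum.cong refl) (simp add: algebra_simps)
  finally have "Re (quad_form m M x) = (\<Sum>g\<in>P. Re (cnj (\<beta> g) * \<beta> g))" by (simp add: Re_sum)
  also have "\<dots> \<ge> 0" by (intro sum_nonneg) (simp add: mult.commute[of "cnj _"] complex_mult_cnj)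
  finally show "0 \<le> Re (quad_form m M x)" .
qed

section \<open>Kronecker products along a coordinate bijection\<close>

text \<open>\<open>s i r\<close> is the index in the \<open>i\<close>-th factor that belongs to the index \<open>r\<close> of the
  product; \<open>coords_bij\<close> says that \<open>r \<mapsto> (s i r)\<^sub>i\<close> enumerates all tuples of factor indices.\<close>

definition kron_fun ::
    "nat \<Rightarrow> (nat \<Rightarrow> nat \<Rightarrow> nat) \<Rightarrow> (nat \<Rightarrow> nat \<Rightarrow> nat \<Rightarrow> complex) \<Rightarrow> nat \<Rightarrow> nat \<Rightarrow> complex" where
  "kron_fun n s M r c = (\<Prod>i<n. M i (s i r) (s i c))"

definition coords_bij :: "nat \<Rightarrow> (nat \<Rightarrow> nat) \<Rightarrow> nat \<Rightarrow> (nat \<Rightarrow> nat \<Rightarrow> nat) \<Rightarrow> bool" where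
  "coords_bij n m R s \<longleftrightarrow>
     bij_betw (\<lambda>r. restrict (\<lambda>i. s i r) {..<n}) {..<R} (PiE {..<n} (\<lambda>i. {..<m i}))"

lemma coords_bij_surj:
  assumes "coords_bij n m R s" "\<And>i. i < n \<Longrightarrow> a i < m i"
  obtains r where "r < R" "\<And>i. i < n \<Longrightarrow> s i r = a i"
proof -
  have "restrict a {..<n} \<in> (\<lambda>r. restrict (\<lambda>i. s i r) {..<n}) ` {..<R}"
    using assms unfolding coords_bij_def bij_betw_def by auto
  then obtain r where "r < R" "restrict a {..<n} = restrict (\<lambda>i. s i r) {..<n}" by auto
  then show ?thesis using that by (metis lessThan_iff restrict_apply')
qed

lemma psd_fun_kron_fun:
  assumes coords: "\<And>i r. i < n \<Longrightarrow> r < R \<Longrightarrow> s i r < m i"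
    and psd: "\<And>i. i < n \<Longrightarrow> psd_fun (m i) (M i)"
  shows "psd_fun R (kron_fun n s M)"
proof -
  have "\<forall>i\<in>{..<n}. \<exists>N v. \<forall>p<m i. \<forall>q<m i. M i p q = (\<Sum>j<(N::nat). v j p * cnj (v j q))"
    using psd_fun_gram psd by blast
  from bchoice[OF this] obtain N :: "nat \<Rightarrow> nat"
    where "\<forall>i\<in>{..<n}. \<exists>v. \<forall>p<m i. \<forall>q<m i. M i p q = (\<Sum>j<N i. v j p * cnj (v j q))"
    by blast
  from bchoice[OF this] obtain v
    where gram: "\<forall>i\<in>{..<n}. \<forall>p<m i. \<forall>q<m i. M i p q = (\<Sum>j<N i. v i j p * cnj (v i j q))"
    by blast
  define P where "P = PiE {..<n} (\<lambda>i. {..<N i})"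
  show ?thesis
  proof (rule psd_fun_of_gram[where P = P and v = "\<lambda>g r. \<Prod>i<n. v i (g i) (s i r)"])
    show "finite P" unfolding P_def by (simp add: finite_PiE)
    fix r c assume "r < R" "c < R"
    then have "kron_fun n s M r c = (\<Prod>i<n. \<Sum>j<N i. v i j (s i r) * cnj (v i j (s i c)))"
      unfolding kron_fun_def using coords gram by (intro prod.cong refl) auto
    also have "\<dots> = (\<Sum>g\<in>P. \<Prod>i<n. v i (g i) (s i r) * cnj (v i (g i) (s i c)))"
      unfolding P_def by (rule prod_sum_PiE) auto
    finally show "kron_fun n s M r c = (\<Sum>g\<in>P. (\<Prod>i<n. v i (g i) (s i r)) * cnj (\<Prod>i<n. v i (g i) (s i c)))"
      by (simp add: cnj_prod prod.distrib)
  qed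
qed

lemma quad_form_kron_fun:
  assumes "coords_bij n m R s"
  shows "quad_form R (kron_fun n s M) (\<lambda>r. \<Prod>i<n. w i (s i r)) = (\<Prod>i<n. quad_form (m i) (M i) (w i))"
proof -
  define P where "P = PiE {..<n} (\<lambda>i. {..<m i})"
  define \<sigma> where "\<sigma> r = restrict (\<lambda>i. s i r) {..<n}" for r
  define h where "h i a b = cnj (w i a) * M i a b * w i b" for i a b
  define G where "G f g = (\<Prod>i<n. h i (f i) (g i))" for f g
  have bij: "bij_betw \<sigma> {..<R} P" using assms unfolding coords_bij_def \<sigma>_def P_def .
  have "quad_form R (kron_fun n s M) (\<lambda>r. \<Prod>i<n. w i (s i r)) = (\<Sum>r<R. \<Sum>c<R. G (\<sigma> r) (\<sigma> c))"
    unfolding quad_form_def kron_fun_def G_def h_def \<sigma>_def cnj_prod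
    by (intro sum.cong refl) (simp add: prod.distrib[symmetric])
  also have "\<dots> = (\<Sum>r<R. \<Sum>g\<in>P. G (\<sigma> r) g)"
    by (intro sum.cong refl sum.reindex_bij_betw[OF bij])
  also have "\<dots> = (\<Sum>f\<in>P. \<Sum>g\<in>P. G f g)"
    by (rule sum.reindex_bij_betw[OF bij])
  also have "\<dots> = (\<Sum>f\<in>P. \<Prod>i<n. \<Sum>b<m i. h i (f i) b)"
    unfolding P_def G_def by (intro sum.cong refl prod_sum_PiE[symmetric]) auto
  also have "\<dots> = (\<Prod>i<n. quad_form (m i) (M i) (w i))"
    unfolding P_def quad_form_def h_def by (rule prod_sum_PiE[symmetric]) auto
  finally show ?thesis .
qed

lemma psd_fun_factor_of_kron_fun:
  assumes coords: "coords_bij n m R s" and psd: "psd_fun R (kron_fun n s M)"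
    and pos: "\<And>i. i < n \<Longrightarrow> Im (quad_form (m i) (M i) (w i)) = 0 \<and> 0 < Re (quad_form (m i) (M i) (w i))"
    and "i0 < n"
  shows "psd_fun (m i0) (M i0)"
proof -
  define c where "c = (\<Prod>i\<in>{..<n}-{i0}. Re (quad_form (m i) (M i) (w i)))"
  have "c > 0" unfolding c_def using pos by (intro prod_pos) auto
  have factor: "Im (quad_form (m i0) (M i0) x) = 0 \<and> 0 \<le> Re (quad_form (m i0) (M i0) x)" for x
  proof -
    define W where "W = w(i0 := x)"
    define q where "q = quad_form R (kron_fun n s M) (\<lambda>r. \<Prod>i<n. W i (s i r))"
    have "q = (\<Prod>i<n. quad_form (m i) (M i) (W i))"
      unfolding q_def by (rule quad_form_kron_fun[OF coords])
    also have "\<dots> = quad_form (m i0) (M i0) x * (\<Prod>i\<in>{..<n}-{i0}. quad_form (m i) (M i) (w i))"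
      using \<open>i0 < n\<close> by (subst prod.remove[of _ i0]) (auto simp: W_def)
    also have "(\<Prod>i\<in>{..<n}-{i0}. quad_form (m i) (M i) (w i)) = of_real c"
      unfolding c_def of_real_prod using pos by (intro prod.cong refl) (auto simp: complex_eq_iff)
    finally have "quad_form (m i0) (M i0) x = q / of_real c" using \<open>c > 0\<close> by simp
    moreover have "Im q = 0" unfolding q_def
      using psd unfolding psd_fun_def by (intro quad_form_real_if_hermitian) blast
    moreover have "0 \<le> Re q" using psd unfolding psd_fun_def q_def by blast
    ultimately show ?thesis using \<open>c > 0\<close> by simp
  qed
  show ?thesis unfolding psd_fun_def
    using factor hermitian_if_quad_form_real[of "m i0" "M i0"] by blast
qed

lemma kron_fun_eq_imp_proportional:
  assumes coords: "coords_bij n m R s"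
    and diag: "\<And>i. i < n \<Longrightarrow> p i < m i \<and> G i (p i) (p i) \<noteq> 0"
    and eq: "\<And>r c. r < R \<Longrightarrow> c < R \<Longrightarrow> kron_fun n s H r c = kron_fun n s G r c"
    and "i0 < n"
  shows "\<exists>z. z \<noteq> 0 \<and> (\<forall>a<m i0. \<forall>b<m i0. H i0 a b = z * G i0 a b)"
proof -
  have prod_eq: "(\<Prod>i<n. H i (a i) (b i)) = (\<Prod>i<n. G i (a i) (b i))"
    if a: "\<And>i. i < n \<Longrightarrow> a i < m i" and b: "\<And>i. i < n \<Longrightarrow> b i < m i" for a b
  proof -
    obtain r where "r < R" "\<And>i. i < n \<Longrightarrow> s i r = a i" using coords_bij_surj[OF coords a] by blast
    moreover obtain c where "c < R" "\<And>i. i < n \<Longrightarrow> s i c = b i" using coords_bij_surj[OF coords b] by blast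
    ultimately show ?thesis using eq[of r c] unfolding kron_fun_def by simp
  qed
  define A where "A = {..<n} - {i0}"
  have n_eq: "{..<n} = insert i0 A" and "finite A" "i0 \<notin> A" unfolding A_def using \<open>i0 < n\<close> by auto
  define PH where "PH = (\<Prod>i\<in>A. H i (p i) (p i))"
  define PG where "PG = (\<Prod>i\<in>A. G i (p i) (p i))"
  have "PG \<noteq> 0" unfolding PG_def A_def using diag by auto
  have entry: "H i0 a b * PH = G i0 a b * PG" if "a < m i0" "b < m i0" for a b
  proof -
    have same: "(\<Prod>i\<in>A. F i ((p(i0 := a)) i) ((p(i0 := b)) i)) = (\<Prod>i\<in>A. F i (p i) (p i))" for F
      using \<open>i0 \<notin> A\<close> by (intro prod.cong) auto
    have "(\<Prod>i<n. H i ((p(i0 := a)) i) ((p(i0 := b)) i)) = (\<Prod>i<n. G i ((p(i0 := a)) i) ((p(i0 := b)) i))"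
      using that diag by (intro prod_eq) auto
    then show ?thesis
      unfolding n_eq prod.insert[OF \<open>finite A\<close> \<open>i0 \<notin> A\<close>] same PH_def PG_def by simp
  qed
  have "PH \<noteq> 0" using entry[of "p i0" "p i0"] diag[OF \<open>i0 < n\<close>] \<open>PG \<noteq> 0\<close> by auto
  show ?thesis
  proof (intro exI conjI allI impI)
    show "PG / PH \<noteq> 0" using \<open>PG \<noteq> 0\<close> \<open>PH \<noteq> 0\<close> by simp
    fix a b assume "a < m i0" "b < m i0"
    then show "H i0 a b = PG / PH * G i0 a b" using entry \<open>PH \<noteq> 0\<close> by (simp add: field_simps)
  qed
qed

section \<open>Mixed-radix indices of the shuffle\<close>

lemma pair_index_less: "a < k \<Longrightarrow> b < k \<Longrightarrow> a * k + b < k * (k::nat)"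
proof -
  assume "a < k" "b < k"
  then have "Suc a * k \<le> k * k" by (intro mult_le_mono1) simp
  then show ?thesis using \<open>b < k\<close> by simp
qed

lemma index_div_less: "p < k * k \<Longrightarrow> p div k < (k::nat)"
  by (simp add: less_mult_imp_div_less)

lemma index_mod_less: "p < k * k \<Longrightarrow> p mod k < (k::nat)"
  by (cases k) auto

lemma pair_index_div: "b < k \<Longrightarrow> (a * k + b) div k = (a::nat)"
  by simp

lemma pair_index_mod: "b < k \<Longrightarrow> (a * k + b) mod k = (b::nat)"
  by simp

lemma pair_index_inj: "b < k \<Longrightarrow> b' < k \<Longrightarrow> a * k + b = a' * k + b' \<Longrightarrow> a = a' \<and> b = (b'::nat)"
  by (metis pair_index_div pair_index_mod)

lemma digit_less: "0 < k i \<Longrightarrow> digit k n i y < k i"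
  unfolding digit_def by simp

lemma digit_Suc: "i < n \<Longrightarrow> digit k (Suc n) i y = digit k n i (y div k n)"
proof -
  assume "i < n"
  then have "{i<..<Suc n} = insert n {i<..<n}" by auto
  then show ?thesis unfolding digit_def by (simp add: div_mult2_eq)
qed

lemma digit_last: "digit k (Suc n) n y = y mod k n"
proof -
  have "{n<..<Suc n} = {}" by auto
  then show ?thesis unfolding digit_def by simp
qed

lemma digits_inj:
  "(\<And>i. i < n \<Longrightarrow> 0 < k i) \<Longrightarrow> y < (\<Prod>i<n. k i) \<Longrightarrow> y' < (\<Prod>i<n. k i) \<Longrightarrow>
   (\<And>i. i < n \<Longrightarrow> digit k n i y = digit k n i y') \<Longrightarrow> y = y'"
proof (induction n arbitrary: y y')
  case 0
  then show ?case by simp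
next
  case (Suc n)
  have "y div k n < (\<Prod>i<n. k i)" "y' div k n < (\<Prod>i<n. k i)"
    using Suc.prems(2,3) by (auto intro: less_mult_imp_div_less simp: mult.commute)
  moreover have "digit k n i (y div k n) = digit k n i (y' div k n)" if "i < n" for i
    using Suc.prems(4)[of i] that by (simp add: digit_Suc)
  ultimately have "y div k n = y' div k n" using Suc.IH Suc.prems(1) by simp
  moreover have "y mod k n = y' mod k n" using Suc.prems(4)[of n] by (simp add: digit_last)
  ultimately have "y div k n * k n + y mod k n = y' div k n * k n + y' mod k n" by (simp only:)
  then show ?case by simp
qed

text \<open>Row \<open>r\<close> of the shuffle is the pair \<open>(x, y) = (r div K, r mod K)\<close>, \<open>K = k\<^sub>0 \<cdots> k\<^sub>n\<^sub>-\<^sub>1\<close>,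
  and corresponds to row \<open>(x\<^sub>i, y\<^sub>i)\<close> of the \<open>i\<close>-th factor, \<open>x\<^sub>i\<close> and \<open>y\<^sub>i\<close> being the \<open>i\<close>-th digits.\<close>

definition shuffle_index :: "nat \<Rightarrow> (nat \<Rightarrow> nat) \<Rightarrow> nat \<Rightarrow> nat \<Rightarrow> nat" where
  "shuffle_index n k i r =
     digit k n i (r div (\<Prod>i<n. k i)) * k i + digit k n i (r mod (\<Prod>i<n. k i))"

lemma shuffle_index_less: "0 < k i \<Longrightarrow> shuffle_index n k i r < k i * k i"
  unfolding shuffle_index_def by (intro pair_index_less digit_less)

lemma shuffle_index_pair:
  assumes "y < (\<Prod>i<n. k i)"
  shows "shuffle_index n k i (x * (\<Prod>i<n. k i) + y) = digit k n i x * k i + digit k n i y"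
proof -
  define K where "K = (\<Prod>i<n. k i)"
  have "y < K" using assms unfolding K_def .
  then show ?thesis unfolding shuffle_index_def K_def[symmetric] by (simp add: pair_index_div pair_index_mod)
qed

lemma shuffle_index_inj:
  assumes kpos: "\<And>i. i < n \<Longrightarrow> 0 < k i"
    and "r < (\<Prod>i<n. k i) * (\<Prod>i<n. k i)" "r' < (\<Prod>i<n. k i) * (\<Prod>i<n. k i)"
    and eq: "\<And>i. i < n \<Longrightarrow> shuffle_index n k i r = shuffle_index n k i r'"
  shows "r = r'"
proof -
  define K where "K = (\<Prod>i<n. k i)"
  have "0 < K" unfolding K_def using kpos by (simp add: prod_pos)
  have "digit k n i (r div K) = digit k n i (r' div K) \<and> digit k n i (r mod K) = digit k n i (r' mod K)"
    if "i < n" for i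
  proof -
    have less: "digit k n i y < k i" for y using kpos[OF that] by (rule digit_less)
    from eq[OF that] have "digit k n i (r div K) * k i + digit k n i (r mod K)
        = digit k n i (r' div K) * k i + digit k n i (r' mod K)"
      unfolding shuffle_index_def K_def .
    then show ?thesis by (rule pair_index_inj[OF less less])
  qed
  moreover have "r div K < K" "r' div K < K" "r mod K < K" "r' mod K < K"
    using assms(2,3) \<open>0 < K\<close> unfolding K_def[symmetric] by (simp_all add: index_div_less)
  ultimately have "r div K = r' div K" "r mod K = r' mod K"
    using digits_inj[of n k, OF kpos] unfolding K_def by blast+
  then have "r div K * K + r mod K = r' div K * K + r' mod K" by (simp only:)
  then show "r = r'" by simp
qed

lemma coords_bij_shuffle_index:
  assumes kpos: "\<And>i. i < n \<Longrightarrow> 0 < k i"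
  shows "coords_bij n (\<lambda>i. k i * k i) ((\<Prod>i<n. k i) * (\<Prod>i<n. k i)) (shuffle_index n k)"
proof -
  define K where "K = (\<Prod>i<n. k i)"
  define \<sigma> where "\<sigma> r = restrict (\<lambda>i. shuffle_index n k i r) {..<n}" for r
  have "inj_on \<sigma> {..<K * K}"
  proof (rule inj_onI)
    fix r r' assume r: "r \<in> {..<K * K}" and r': "r' \<in> {..<K * K}" and "\<sigma> r = \<sigma> r'"
    have eq: "shuffle_index n k i r = shuffle_index n k i r'" if "i < n" for i
      using fun_cong[OF \<open>\<sigma> r = \<sigma> r'\<close>, of i] that by (simp add: \<sigma>_def)
    show "r = r'" using r r' unfolding K_def by (intro shuffle_index_inj[of n k, OF kpos _ _ eq]) auto
  qed
  moreover have "\<sigma> ` {..<K * K} \<subseteq> PiE {..<n} (\<lambda>i. {..<k i * k i})"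
  proof (rule image_subsetI)
    show "\<sigma> r \<in> PiE {..<n} (\<lambda>i. {..<k i * k i})" for r
      unfolding \<sigma>_def restrict_PiE_iff using kpos shuffle_index_less by blast
  qed
  moreover have "card (PiE {..<n} (\<lambda>i. {..<k i * k i})) = K * K"
    by (simp add: card_PiE K_def prod.distrib)
  ultimately have "bij_betw \<sigma> {..<K * K} (PiE {..<n} (\<lambda>i. {..<k i * k i}))"
    by (simp add: bij_betw_def card_image card_subset_eq finite_PiE)
  then show ?thesis unfolding coords_bij_def \<sigma>_def K_def .
qed

section \<open>Partial transpose and realignment of shuffles\<close>

definition ptrans_fun :: "nat \<Rightarrow> (nat \<Rightarrow> nat \<Rightarrow> complex) \<Rightarrow> nat \<Rightarrow> nat \<Rightarrow> complex" where
  "ptrans_fun k M p q = M (p div k * k + q mod k) (q div k * k + p mod k)"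

definition realign_fun :: "nat \<Rightarrow> (nat \<Rightarrow> nat \<Rightarrow> complex) \<Rightarrow> nat \<Rightarrow> nat \<Rightarrow> complex" where
  "realign_fun k M p q = M (p div k * k + q div k) (p mod k * k + q mod k)"

lemma ptrans_mat: "ptrans k (mat (k * k) (k * k) (\<lambda>(a, b). M a b)) = mat (k * k) (k * k) (\<lambda>(a, b). ptrans_fun k M a b)"
  unfolding ptrans_def
proof (rule cong_mat)
  fix a b assume "a < dim_row (mat (k * k) (k * k) (\<lambda>(a, b). M a b))" "b < dim_col (mat (k * k) (k * k) (\<lambda>(a, b). M a b))"
  then have "a < k * k" "b < k * k" by simp_all
  then have "a div k * k + b mod k < k * k" "b div k * k + a mod k < k * k"
    by (simp_all add: pair_index_less index_div_less index_mod_less)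
  then show "(case (a, b) of (i, j) \<Rightarrow> mat (k * k) (k * k) (\<lambda>(a, b). M a b) $$ (i div k * k + j mod k, j div k * k + i mod k))
      = (case (a, b) of (a, b) \<Rightarrow> ptrans_fun k M a b)"
    unfolding ptrans_fun_def by simp
qed simp_all

lemma realign_mat: "realign k (mat (k * k) (k * k) (\<lambda>(a, b). M a b)) = mat (k * k) (k * k) (\<lambda>(a, b). realign_fun k M a b)"
  unfolding realign_def
proof (rule cong_mat)
  fix a b assume "a < k * k" "b < k * k"
  then have "a div k * k + b div k < k * k" "a mod k * k + b mod k < k * k"
    by (simp_all add: pair_index_less index_div_less index_mod_less)
  then show "(case (a, b) of (i, j) \<Rightarrow> mat (k * k) (k * k) (\<lambda>(a, b). M a b) $$ (i div k * k + j div k, i mod k * k + j mod k))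
      = (case (a, b) of (a, b) \<Rightarrow> realign_fun k M a b)"
    unfolding realign_fun_def by simp
qed simp_all

lemma ptrans_fun_kron_fun:
  assumes kpos: "\<And>i. i < n \<Longrightarrow> 0 < k i"
  shows "ptrans_fun (\<Prod>i<n. k i) (kron_fun n (shuffle_index n k) M) r c
       = kron_fun n (shuffle_index n k) (\<lambda>i. ptrans_fun (k i) (M i)) r c"
proof -
  define K where "K = (\<Prod>i<n. k i)"
  have "0 < K" unfolding K_def using kpos by (simp add: prod_pos)
  have "M i (shuffle_index n k i (r div K * K + c mod K)) (shuffle_index n k i (c div K * K + r mod K))
      = ptrans_fun (k i) (M i) (shuffle_index n k i r) (shuffle_index n k i c)" if "i < n" for i
  proof -
    have "digit k n i x < k i" for x using kpos[OF that] by (rule digit_less)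
    then show ?thesis using \<open>0 < K\<close> unfolding ptrans_fun_def shuffle_index_pair[where n = n and k = k, folded K_def]
      by (simp add: shuffle_index_def K_def[symmetric] pair_index_div pair_index_mod)
  qed
  then show ?thesis unfolding ptrans_fun_def kron_fun_def K_def[symmetric] by (intro prod.cong) auto
qed

lemma realign_fun_kron_fun:
  assumes kpos: "\<And>i. i < n \<Longrightarrow> 0 < k i" and c: "c < (\<Prod>i<n. k i) * (\<Prod>i<n. k i)"
  shows "realign_fun (\<Prod>i<n. k i) (kron_fun n (shuffle_index n k) M) r c
       = kron_fun n (shuffle_index n k) (\<lambda>i. realign_fun (k i) (M i)) r c"
proof -
  define K where "K = (\<Prod>i<n. k i)"
  have "0 < K" unfolding K_def using kpos by (simp add: prod_pos)
  have "c div K < K" using c unfolding K_def by (rule index_div_less)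
  have "M i (shuffle_index n k i (r div K * K + c div K)) (shuffle_index n k i (r mod K * K + c mod K))
      = realign_fun (k i) (M i) (shuffle_index n k i r) (shuffle_index n k i c)" if "i < n" for i
  proof -
    have "digit k n i x < k i" for x using kpos[OF that] by (rule digit_less)
    then show ?thesis using \<open>0 < K\<close> \<open>c div K < K\<close> unfolding realign_fun_def shuffle_index_pair[where n = n and k = k, folded K_def]
      by (simp add: shuffle_index_def K_def[symmetric] pair_index_div pair_index_mod)
  qed
  then show ?thesis unfolding realign_fun_def kron_fun_def K_def[symmetric] by (intro prod.cong) auto
qed

definition shuffle_fun :: "nat \<Rightarrow> (nat \<Rightarrow> nat) \<Rightarrow> (nat \<Rightarrow> nat \<Rightarrow> nat \<Rightarrow> complex) \<Rightarrow> complex mat" where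
  "shuffle_fun n k M = mat ((\<Prod>i<n. k i) * (\<Prod>i<n. k i)) ((\<Prod>i<n. k i) * (\<Prod>i<n. k i))
     (\<lambda>(r, c). kron_fun n (shuffle_index n k) M r c)"

lemma shuffle_eq_shuffle_fun: "shuffle n k g = shuffle_fun n k (\<lambda>i a b. g i $$ (a, b))"
  unfolding shuffle_def shuffle_fun_def Let_def kron_fun_def shuffle_index_def ..

lemma ptrans_shuffle_fun:
  assumes "\<And>i. i < n \<Longrightarrow> 0 < k i"
  shows "ptrans (\<Prod>i<n. k i) (shuffle_fun n k M) = shuffle_fun n k (\<lambda>i. ptrans_fun (k i) (M i))"
  unfolding shuffle_fun_def ptrans_mat by (rule cong_mat) (auto simp: ptrans_fun_kron_fun assms)

lemma realign_shuffle_fun: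
  assumes "\<And>i. i < n \<Longrightarrow> 0 < k i"
  shows "realign (\<Prod>i<n. k i) (shuffle_fun n k M) = shuffle_fun n k (\<lambda>i. realign_fun (k i) (M i))"
  unfolding shuffle_fun_def realign_mat by (rule cong_mat) (auto simp: realign_fun_kron_fun assms)

lemma shuffle_fun_cong:
  assumes "\<And>i a b. i < n \<Longrightarrow> a < k i * k i \<Longrightarrow> b < k i * k i \<Longrightarrow> H i a b = G i a b"
  shows "shuffle_fun n k H = shuffle_fun n k G"
  unfolding shuffle_fun_def
proof (rule cong_mat)
  fix r c assume "r < (\<Prod>i<n. k i) * (\<Prod>i<n. k i)"
  then have "(\<Prod>i<n. k i) \<noteq> 0" by (intro notI) simp
  then have "0 < k i" if "i < n" for i using that by (fastforce simp: prod_zero_iff)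
  then show "(case (r, c) of (r, c) \<Rightarrow> kron_fun n (shuffle_index n k) H r c)
      = (case (r, c) of (r, c) \<Rightarrow> kron_fun n (shuffle_index n k) G r c)"
    unfolding kron_fun_def using assms shuffle_index_less by (auto intro!: prod.cong)
qed simp_all

lemma psd_shuffle_fun_iff:
  assumes pos: "\<And>i. i < n \<Longrightarrow> \<exists>w. Im (quad_form (k i * k i) (M i) w) = 0 \<and> 0 < Re (quad_form (k i * k i) (M i) w)"
  shows "psd (shuffle_fun n k M) \<longleftrightarrow> (\<forall>i<n. psd_fun (k i * k i) (M i))"
proof -
  have "\<forall>i\<in>{..<n}. \<exists>w. Im (quad_form (k i * k i) (M i) w) = 0 \<and> 0 < Re (quad_form (k i * k i) (M i) w)"
    using pos by blast
  from bchoice[OF this] obtain w :: "nat \<Rightarrow> nat \<Rightarrow> complex"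
    where w: "\<forall>i\<in>{..<n}. Im (quad_form (k i * k i) (M i) (w i)) = 0 \<and> 0 < Re (quad_form (k i * k i) (M i) (w i))"
    by blast
  have kpos: "0 < k i" if "i < n" for i
  proof (rule ccontr)
    assume "\<not> 0 < k i"
    then have "quad_form (k i * k i) (M i) (w i) = 0" unfolding quad_form_def by simp
    moreover have "0 < Re (quad_form (k i * k i) (M i) (w i))" using w that by blast
    ultimately show False by simp
  qed
  then have coords: "coords_bij n (\<lambda>i. k i * k i) ((\<Prod>i<n. k i) * (\<Prod>i<n. k i)) (shuffle_index n k)"
    by (rule coords_bij_shuffle_index)
  have "psd (shuffle_fun n k M) \<longleftrightarrow> psd_fun ((\<Prod>i<n. k i) * (\<Prod>i<n. k i)) (kron_fun n (shuffle_index n k) M)"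
    unfolding shuffle_fun_def by (rule psd_mat_iff_psd_fun)
  also have "\<dots> \<longleftrightarrow> (\<forall>i<n. psd_fun (k i * k i) (M i))"
  proof
    assume "psd_fun ((\<Prod>i<n. k i) * (\<Prod>i<n. k i)) (kron_fun n (shuffle_index n k) M)"
    from psd_fun_factor_of_kron_fun[OF coords this] w show "\<forall>i<n. psd_fun (k i * k i) (M i)" by blast
  next
    assume "\<forall>i<n. psd_fun (k i * k i) (M i)"
    then show "psd_fun ((\<Prod>i<n. k i) * (\<Prod>i<n. k i)) (kron_fun n (shuffle_index n k) M)"
      using kpos shuffle_index_less by (intro psd_fun_kron_fun) auto
  qed
  finally show ?thesis .
qed

lemma shuffle_fun_eq_imp_proportional:
  assumes diag: "\<And>i. i < n \<Longrightarrow> p i < k i * k i \<and> G i (p i) (p i) \<noteq> 0"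
    and eq: "shuffle_fun n k H = shuffle_fun n k G" and "i < n"
  shows "\<exists>z. z \<noteq> 0 \<and> (\<forall>a<k i * k i. \<forall>b<k i * k i. H i a b = z * G i a b)"
proof -
  have "0 < k i" if "i < n" for i using diag[OF that] by (cases "k i") auto
  then have coords: "coords_bij n (\<lambda>i. k i * k i) ((\<Prod>i<n. k i) * (\<Prod>i<n. k i)) (shuffle_index n k)"
    by (rule coords_bij_shuffle_index)
  have kron_eq: "kron_fun n (shuffle_index n k) H r c = kron_fun n (shuffle_index n k) G r c"
    if "r < (\<Prod>i<n. k i) * (\<Prod>i<n. k i)" "c < (\<Prod>i<n. k i) * (\<Prod>i<n. k i)" for r c
    using arg_cong[OF eq, of "\<lambda>A. A $$ (r, c)"] that unfolding shuffle_fun_def by simp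
  show ?thesis using kron_fun_eq_imp_proportional[OF coords _ kron_eq \<open>i < n\<close>] diag by blast
qed

section \<open>Properties of a single factor\<close>

lemma ptrans_fun_positive:
  assumes "psd_fun (k * k) G" "p < k * k" "G p p \<noteq> 0"
  shows "\<exists>w. Im (quad_form (k * k) (ptrans_fun k G) w) = 0 \<and> 0 < Re (quad_form (k * k) (ptrans_fun k G) w)"
proof -
  have "quad_form (k * k) (ptrans_fun k G) (\<lambda>j. if j \<in> {p} then 1 else 0) = G p p"
    using assms(2) by (subst quad_form_indicator) (simp_all add: ptrans_fun_def)
  then show ?thesis using psd_fun_diag_pos[OF assms] by metis
qed

lemma realign_ptrans_fun_apply:
  "y < k * k \<Longrightarrow> realign_fun k (ptrans_fun k G) x y = G (x div k * k + y mod k) (x mod k * k + y div k)"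
  unfolding realign_fun_def ptrans_fun_def by (simp add: pair_index_div pair_index_mod index_div_less index_mod_less)

text \<open>On the vector \<open>e\<^sub>a\<^sub>a + e\<^sub>b\<^sub>b\<close>, where \<open>p = (a, b)\<close>, every matrix entry of \<open>\<R>(\<gamma>\<^sup>\<Gamma>)\<close> that is
  involved is a diagonal entry of \<open>\<gamma>\<close>, and one of them is \<open>\<gamma>\<^sub>p\<^sub>p\<close>.\<close>
lemma realign_ptrans_fun_positive:
  assumes psd: "psd_fun (k * k) G" and p: "p < k * k" "G p p \<noteq> 0"
  shows "\<exists>w. Im (quad_form (k * k) (realign_fun k (ptrans_fun k G)) w) = 0
           \<and> 0 < Re (quad_form (k * k) (realign_fun k (ptrans_fun k G)) w)"
proof -
  define S where "S = {p div k * k + p div k, p mod k * k + p mod k}"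
  define f where "f ij = G (fst ij div k * k + snd ij div k) (fst ij div k * k + snd ij div k)" for ij
  have "p div k < k" "p mod k < k" using p(1) by (simp_all add: index_div_less index_mod_less)
  then have S: "S \<subseteq> {..<k * k}" "\<And>i. i \<in> S \<Longrightarrow> i mod k = i div k \<and> i div k < k"
    unfolding S_def by (auto simp: pair_index_less pair_index_div pair_index_mod)
  have q: "quad_form (k * k) (realign_fun k (ptrans_fun k G)) (\<lambda>j. if j \<in> S then 1 else 0) = (\<Sum>ij\<in>S \<times> S. f ij)"
    unfolding quad_form_indicator[OF S(1)] sum.cartesian_product
    using S by (intro sum.cong refl) (auto simp: f_def realign_ptrans_fun_apply)
  have f_diag: "Im (f ij) = 0 \<and> 0 \<le> Re (f ij)" if "ij \<in> S \<times> S" for ij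
    using that S psd_fun_diag[OF psd] unfolding f_def by (auto simp: pair_index_less)
  have mem: "(p div k * k + p div k, p mod k * k + p mod k) \<in> S \<times> S" unfolding S_def by simp
  have fp: "f (p div k * k + p div k, p mod k * k + p mod k) = G p p"
    unfolding f_def using \<open>p div k < k\<close> \<open>p mod k < k\<close> by (simp add: pair_index_div)
  show ?thesis
  proof (intro exI conjI)
    show "Im (quad_form (k * k) (realign_fun k (ptrans_fun k G)) (\<lambda>j. if j \<in> S then 1 else 0)) = 0"
      unfolding q using f_diag by (simp add: Im_sum)
    have "0 < Re (G p p)" using psd_fun_diag_pos(2)[OF psd p] .
    also have "Re (G p p) \<le> Re (\<Sum>ij\<in>S \<times> S. f ij)"
      unfolding Re_sum fp[symmetric] using mem f_diag by (intro member_le_sum) (auto simp: S_def)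
    finally show "0 < Re (quad_form (k * k) (realign_fun k (ptrans_fun k G)) (\<lambda>j. if j \<in> S then 1 else 0))"
      unfolding q .
  qed
qed

lemma realign_fun_realign_fun: "a < k * k \<Longrightarrow> b < k * k \<Longrightarrow> realign_fun k (realign_fun k G) a b = G a b"
  unfolding realign_fun_def by (simp add: pair_index_div pair_index_mod index_div_less index_mod_less)

text \<open>If \<open>\<R>(\<gamma>) = z \<gamma>\<close>, then \<open>z\<^sup>2 = 1\<close> because \<open>\<R>\<close> is an involution; \<open>z = -1\<close> would make the
  diagonal entries \<open>\<gamma>\<^sub>c\<^sub>c\<^sub>,\<^sub>c\<^sub>c\<close> vanish, hence \<open>\<R>(\<gamma>)\<^sub>p\<^sub>p = \<gamma>\<^sub>a\<^sub>a\<^sub>,\<^sub>b\<^sub>b = 0\<close> for \<open>p = (a, b)\<close>.\<close>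
lemma realign_fun_eq_if_proportional:
  assumes psd: "psd_fun (k * k) G" and p: "p < k * k" "G p p \<noteq> 0"
    and z: "\<forall>a<k * k. \<forall>b<k * k. realign_fun k G a b = z * G a b"
  shows "\<forall>a<k * k. \<forall>b<k * k. realign_fun k G a b = G a b"
proof -
  define u where "u = p div k * k + p div k"
  define v where "v = p mod k * k + p mod k"
  have "p div k < k" "p mod k < k" using p(1) by (simp_all add: index_div_less index_mod_less)
  then have uv: "u < k * k" "v < k * k" unfolding u_def v_def by (simp_all add: pair_index_less)
  have Rp: "realign_fun k G p p = G u v" unfolding realign_fun_def u_def v_def ..
  have "G p p = realign_fun k (realign_fun k G) p p" using realign_fun_realign_fun p(1) by simp
  also have "\<dots> = realign_fun k G u v"
    unfolding realign_fun_def u_def v_def ..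
  also have "\<dots> = z * (z * G p p)" using z uv p(1) Rp by simp
  finally have "z * z = 1" using p(2) by (simp add: algebra_simps)
  moreover have "z \<noteq> -1"
  proof
    assume "z = -1"
    have "realign_fun k G v v = G v v" unfolding realign_fun_def v_def
      using \<open>p mod k < k\<close> by (simp add: pair_index_div pair_index_mod)
    then have "G v v = 0" using z uv \<open>z = -1\<close> by simp
    then have "realign_fun k G p p = 0" unfolding Rp using psd_fun_zero_diag[OF psd uv] by simp
    then show False using z p \<open>z = -1\<close> by simp
  qed
  ultimately have "z = 1" by (metis square_eq_1_iff)
  then show ?thesis using z by simp
qed

lemma nonzero_diag_if_not_antisym:
  assumes carr: "A \<in> carrier_mat (k * k) (k * k)" and "psd A" and "\<not> mat_image A \<subseteq> antisym_subspace k"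
  shows "\<exists>p<k * k. A $$ (p, p) \<noteq> 0"
proof (rule ccontr)
  assume "\<not> (\<exists>p<k * k. A $$ (p, p) \<noteq> 0)"
  then have diag: "A $$ (j, j) = 0" if "j < k * k" for j using that by blast
  have psdA: "psd_fun (k * k) (\<lambda>i j. A $$ (i, j))"
    using \<open>psd A\<close> unfolding psd_mat_iff_psd_fun[symmetric] carrier_mat_eq_mat[OF carr, symmetric] .
  have zero: "A $$ (i, j) = 0" if "i < k * k" "j < k * k" for i j
    using psd_fun_zero_diag[OF psdA that] diag[OF that(2)] by simp
  have "x \<in> antisym_subspace k" if image: "x \<in> mat_image A" for x
  proof -
    obtain v where v: "v \<in> carrier_vec (k * k)" and x: "x = A *\<^sub>v v"
      using image carr unfolding mat_image_def by auto
    have "x $ i = 0" if "i < k * k" for i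
    proof -
      have "x $ i = (\<Sum>j<k * k. A $$ (i, j) * v $ j)"
        using that carr v unfolding x by (simp add: scalar_prod_def atLeast0LessThan)
      also have "\<dots> = 0" using zero that by simp
      finally show ?thesis .
    qed
    moreover have "x \<in> carrier_vec (k * k)" unfolding x using carr v by (rule mult_mat_vec_carrier)
    ultimately show ?thesis unfolding antisym_subspace_def by (simp add: pair_index_less)
  qed
  then have "mat_image A \<subseteq> antisym_subspace k" by (rule subsetI)
  with assms(3) show False by contradiction
qed

lemma psd_ptrans_shuffle_fun_iff:
  assumes "\<And>i. i < n \<Longrightarrow> psd_fun (k i * k i) (G i)"
    and "\<And>i. i < n \<Longrightarrow> p i < k i * k i \<and> G i (p i) (p i) \<noteq> 0"
  shows "psd (ptrans (\<Prod>i<n. k i) (shuffle_fun n k G)) \<longleftrightarrow>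
           (\<forall>i<n. psd_fun (k i * k i) (ptrans_fun (k i) (G i)))"
proof -
  have kpos: "0 < k i" if "i < n" for i using assms(2)[OF that] by (cases "k i") auto
  have "psd (shuffle_fun n k (\<lambda>i. ptrans_fun (k i) (G i))) \<longleftrightarrow>
      (\<forall>i<n. psd_fun (k i * k i) (ptrans_fun (k i) (G i)))"
    using assms by (intro psd_shuffle_fun_iff ptrans_fun_positive) auto
  then show ?thesis using ptrans_shuffle_fun[of n k G] kpos by simp
qed

lemma psd_realign_ptrans_shuffle_fun_iff:
  assumes "\<And>i. i < n \<Longrightarrow> psd_fun (k i * k i) (G i)"
    and "\<And>i. i < n \<Longrightarrow> p i < k i * k i \<and> G i (p i) (p i) \<noteq> 0"
  shows "psd (realign (\<Prod>i<n. k i) (ptrans (\<Prod>i<n. k i) (shuffle_fun n k G))) \<longleftrightarrow>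
           (\<forall>i<n. psd_fun (k i * k i) (realign_fun (k i) (ptrans_fun (k i) (G i))))"
proof -
  have kpos: "0 < k i" if "i < n" for i using assms(2)[OF that] by (cases "k i") auto
  have "psd (shuffle_fun n k (\<lambda>i. realign_fun (k i) (ptrans_fun (k i) (G i)))) \<longleftrightarrow>
      (\<forall>i<n. psd_fun (k i * k i) (realign_fun (k i) (ptrans_fun (k i) (G i))))"
    using assms by (intro psd_shuffle_fun_iff realign_ptrans_fun_positive) auto
  then show ?thesis using ptrans_shuffle_fun[of n k G] realign_shuffle_fun[of n k] kpos by simp
qed

lemma realign_shuffle_fun_eq_iff:
  assumes psd: "\<And>i. i < n \<Longrightarrow> psd_fun (k i * k i) (G i)"
    and diag: "\<And>i. i < n \<Longrightarrow> p i < k i * k i \<and> G i (p i) (p i) \<noteq> 0"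
  shows "realign (\<Prod>i<n. k i) (shuffle_fun n k G) = shuffle_fun n k G \<longleftrightarrow>
           (\<forall>i<n. \<forall>a<k i * k i. \<forall>b<k i * k i. realign_fun (k i) (G i) a b = G i a b)"
proof
  have "0 < k i" if "i < n" for i using diag[OF that] by (cases "k i") auto
  then have R: "realign (\<Prod>i<n. k i) (shuffle_fun n k G) = shuffle_fun n k (\<lambda>i. realign_fun (k i) (G i))"
    by (rule realign_shuffle_fun)
  {
    assume "realign (\<Prod>i<n. k i) (shuffle_fun n k G) = shuffle_fun n k G"
    then have "\<exists>z. z \<noteq> 0 \<and> (\<forall>a<k i * k i. \<forall>b<k i * k i. realign_fun (k i) (G i) a b = z * G i a b)"
      if "i < n" for i
      unfolding R using diag that by (intro shuffle_fun_eq_imp_proportional) auto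
    then show "\<forall>i<n. \<forall>a<k i * k i. \<forall>b<k i * k i. realign_fun (k i) (G i) a b = G i a b"
      using realign_fun_eq_if_proportional[OF psd] diag by blast
  next
    assume "\<forall>i<n. \<forall>a<k i * k i. \<forall>b<k i * k i. realign_fun (k i) (G i) a b = G i a b"
    then show "realign (\<Prod>i<n. k i) (shuffle_fun n k G) = shuffle_fun n k G"
      unfolding R by (intro shuffle_fun_cong) auto
  }
qed

theorem mainTheorem16:
  fixes n :: nat and k :: "nat \<Rightarrow> nat" and g :: "nat \<Rightarrow> complex mat"
  assumes carr: "\<And>i. i < n \<Longrightarrow> g i \<in> carrier_mat (k i * k i) (k i * k i)"
    and state: "\<And>i. i < n \<Longrightarrow> psd (g i)"
    and notanti: "\<And>i. i < n \<Longrightarrow> \<not> mat_image (g i) \<subseteq> antisym_subspace (k i)"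
  shows "(psd (ptrans (\<Prod>i<n. k i) (shuffle n k g)) \<longleftrightarrow>
            (\<forall>i < n. psd (ptrans (k i) (g i))))
       \<and> (psd (realign (\<Prod>i<n. k i) (ptrans (\<Prod>i<n. k i) (shuffle n k g))) \<longleftrightarrow>
            (\<forall>i < n. psd (realign (k i) (ptrans (k i) (g i)))))
       \<and> (realign (\<Prod>i<n. k i) (shuffle n k g) = shuffle n k g \<longleftrightarrow>
            (\<forall>i < n. realign (k i) (g i) = g i))"
proof -
  define G where "G i = (\<lambda>a b. g i $$ (a, b))" for i
  have g: "g i = mat (k i * k i) (k i * k i) (\<lambda>(a, b). G i a b)" if "i < n" for i
    unfolding G_def using carr[OF that] by (rule carrier_mat_eq_mat)
  have psd: "psd_fun (k i * k i) (G i)" if "i < n" for i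
    using state[OF that] unfolding g[OF that] psd_mat_iff_psd_fun .
  have "\<forall>i\<in>{..<n}. \<exists>p. p < k i * k i \<and> G i p p \<noteq> 0"
    using nonzero_diag_if_not_antisym[OF carr state notanti] unfolding G_def by blast
  from bchoice[OF this] obtain p where diag: "\<And>i. i < n \<Longrightarrow> p i < k i * k i \<and> G i (p i) (p i) \<noteq> 0"
    by blast
  have "shuffle n k g = shuffle_fun n k G"
    unfolding G_def by (rule shuffle_eq_shuffle_fun)
  moreover have "psd (ptrans (k i) (g i)) \<longleftrightarrow> psd_fun (k i * k i) (ptrans_fun (k i) (G i))"
    and "psd (realign (k i) (ptrans (k i) (g i))) \<longleftrightarrow>
           psd_fun (k i * k i) (realign_fun (k i) (ptrans_fun (k i) (G i)))"
    and "realign (k i) (g i) = g i \<longleftrightarrow> (\<forall>a<k i * k i. \<forall>b<k i * k i. realign_fun (k i) (G i) a b = G i a b)"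
    if "i < n" for i
    unfolding g[OF that] ptrans_mat realign_mat psd_mat_iff_psd_fun by (auto simp: mat_eq_iff)
  ultimately show ?thesis
    using psd_ptrans_shuffle_fun_iff[of n k G p, OF psd diag]
      psd_realign_ptrans_shuffle_fun_iff[of n k G p, OF psd diag]
      realign_shuffle_fun_eq_iff[of n k G p, OF psd diag] by simp
qed

end
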